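(* Let $A$ be a finite-dimensional evolution algebra. Then $A$ is semisimple if and only if $A$ has a unit.
   Context: An evolution algebra is an algebra $A$ over $\mathbb{K}\in\{\mathbb{R},\mathbb{C}\}$ with a basis $\{e_i\}$ (natural basis) with $e_ie_j=0$ for $i\neq j$. An ideal $M$ is modular if some $u\in A$ satisfies $a-au\in M$ for all $a\in A$; $\mathrm{Rad}(A)$ is the intersection of all maximal modular ideals (equal to $A$ if there are none); $A$ is semisimple if $\mathrm{Rad}(A)=\{0\}$. *)

theory Defs
  imports Complex_Main
begin

definition is_algebra :: "('k::field \<Rightarrow> 'v::ab_group_add \<Rightarrow> 'v) \<Rightarrow> ('v \<Rightarrow> 'v \<Rightarrow> 'v) \<Rightarrow> bool" where
  "is_algebra scale mul \<longleftrightarrow>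
     vector_space scale \<and>
     (\<forall>x. Vector_Spaces.linear scale scale (mul x)) \<and>
     (\<forall>y. Vector_Spaces.linear scale scale (\<lambda>x. mul x y))"

definition natural_basis :: "('k::field \<Rightarrow> 'v::ab_group_add \<Rightarrow> 'v) \<Rightarrow> ('v \<Rightarrow> 'v \<Rightarrow> 'v) \<Rightarrow> 'v set \<Rightarrow> bool" where
  "natural_basis scale mul B \<longleftrightarrow>
     \<not> module.dependent scale B \<and> module.span scale B = UNIV \<and>
     (\<forall>e\<in>B. \<forall>e'\<in>B. e \<noteq> e' \<longrightarrow> mul e e' = 0)"

text \<open>Finite-dimensional evolution algebra: an algebra having a natural basis,
  which is finite (equivalently, the algebra is finite-dimensional).\<close>
definition fin_dim_evolution_algebra :: "('k::field \<Rightarrow> 'v::ab_group_add \<Rightarrow> 'v) \<Rightarrow> ('v \<Rightarrow> 'v \<Rightarrow> 'v) \<Rightarrow> bool" where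
  "fin_dim_evolution_algebra scale mul \<longleftrightarrow>
     is_algebra scale mul \<and> (\<exists>B. finite B \<and> natural_basis scale mul B)"

definition alg_ideal :: "('k::field \<Rightarrow> 'v::ab_group_add \<Rightarrow> 'v) \<Rightarrow> ('v \<Rightarrow> 'v \<Rightarrow> 'v) \<Rightarrow> 'v set \<Rightarrow> bool" where
  "alg_ideal scale mul M \<longleftrightarrow>
     module.subspace scale M \<and> (\<forall>a m. m \<in> M \<longrightarrow> mul a m \<in> M \<and> mul m a \<in> M)"

definition modular_ideal :: "('k::field \<Rightarrow> 'v::ab_group_add \<Rightarrow> 'v) \<Rightarrow> ('v \<Rightarrow> 'v \<Rightarrow> 'v) \<Rightarrow> 'v set \<Rightarrow> bool" where
  "modular_ideal scale mul M \<longleftrightarrow>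
     alg_ideal scale mul M \<and> (\<exists>u. \<forall>a. a - mul a u \<in> M)"

definition maximal_modular_ideal :: "('k::field \<Rightarrow> 'v::ab_group_add \<Rightarrow> 'v) \<Rightarrow> ('v \<Rightarrow> 'v \<Rightarrow> 'v) \<Rightarrow> 'v set \<Rightarrow> bool" where
  "maximal_modular_ideal scale mul M \<longleftrightarrow>
     modular_ideal scale mul M \<and> M \<noteq> UNIV \<and>
     (\<forall>N. alg_ideal scale mul N \<and> M \<subseteq> N \<and> N \<noteq> UNIV \<longrightarrow> N = M)"

text \<open>Radical: intersection of all maximal modular ideals (UNIV if there are none,
  since the empty intersection is UNIV).\<close>
definition alg_rad :: "('k::field \<Rightarrow> 'v::ab_group_add \<Rightarrow> 'v) \<Rightarrow> ('v \<Rightarrow> 'v \<Rightarrow> 'v) \<Rightarrow> 'v set" where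
  "alg_rad scale mul = \<Inter> {M. maximal_modular_ideal scale mul M}"

definition semisimple :: "('k::field \<Rightarrow> 'v::ab_group_add \<Rightarrow> 'v) \<Rightarrow> ('v \<Rightarrow> 'v \<Rightarrow> 'v) \<Rightarrow> bool" where
  "semisimple scale mul \<longleftrightarrow> alg_rad scale mul = {0}"

definition has_unit :: "('v \<Rightarrow> 'v \<Rightarrow> 'v) \<Rightarrow> bool" where
  "has_unit mul \<longleftrightarrow> (\<exists>u. \<forall>a. mul u a = a \<and> mul a u = a)"

end

theory Submission
  imports Defs
begin

text \<open>With respect to a natural basis \<open>B\<close> the product is coordinatewise:
  \<open>x y = (\<Sum>b\<in>B. x\<^sub>b y\<^sub>b b\<^sup>2)\<close>.
  If \<open>u\<close> is a unit, then \<open>b\<^sup>2 = u\<^sub>b\<^sup>-\<^sup>1 b\<close> for every \<open>b \<in> B\<close>, so each coordinate hyperplane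
  \<open>{x. x\<^sub>b = 0}\<close> is a maximal modular ideal, and these hyperplanes meet in \<open>0\<close>.
  Conversely, a maximal modular ideal \<open>M\<close> missing a basis vector \<open>e\<close> contains every other
  basis vector and no vector with nonzero \<open>e\<close>-coordinate. If \<open>A\<close> is semisimple, every basis
  vector is missed by some such \<open>M\<close>; this forces \<open>b\<^sup>2 = \<lambda>\<^sub>b b\<close> with \<open>\<lambda>\<^sub>b \<noteq> 0\<close>, and then
  \<open>\<Sum>b\<in>B. \<lambda>\<^sub>b\<^sup>-\<^sup>1 b\<close> is a unit.\<close>

locale finite_evolution_algebra = vector_space +
  fixes mul :: "'b \<Rightarrow> 'b \<Rightarrow> 'b" and B :: "'b set"
  assumes linear_in_right: "\<And>x. Vector_Spaces.linear scale scale (mul x)"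
    and linear_in_left: "\<And>y. Vector_Spaces.linear scale scale (\<lambda>x. mul x y)"
    and finite_B: "finite B" and independent_B: "\<not> dependent B" and span_B: "span B = UNIV"
    and mul_basis_distinct: "\<And>e e'. e \<in> B \<Longrightarrow> e' \<in> B \<Longrightarrow> e \<noteq> e' \<Longrightarrow> mul e e' = 0"
begin

definition coord :: "'b \<Rightarrow> 'b \<Rightarrow> 'a" where
  "coord x b = representation B x b"

lemma sum_coord_scale: "(\<Sum>b\<in>B. coord x b *s b) = x"
  unfolding coord_def using sum_representation_eq[of B x B] independent_B span_B finite_B by auto

lemma coord_basis: "b \<in> B \<Longrightarrow> coord b b' = (if b' = b then 1 else 0)"
  unfolding coord_def using representation_basis[of B b] independent_B by auto

lemma coord_add: "coord (x + y) b = coord x b + coord y b"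
  and coord_diff: "coord (x - y) b = coord x b - coord y b"
  and coord_scale: "coord (r *s x) b = r * coord x b"
  and coord_zero: "coord 0 b = 0"
  and coord_sum: "coord (sum f I) b = (\<Sum>i\<in>I. coord (f i) b)"
  unfolding coord_def using independent_B span_B
  by (auto simp: representation_add representation_diff representation_scale
      representation_zero representation_sum)

lemma sum_scale_basis_coord:
  assumes "k \<in> B" shows "(\<Sum>b\<in>B. f b * coord b k) = f k"
proof -
  have "(\<Sum>b\<in>B. f b * coord b k) = (\<Sum>b\<in>B. if b = k then f k else 0)"
    by (rule sum.cong) (auto simp: coord_basis)
  then show ?thesis using assms finite_B by simp
qed

lemma basis_neq_zero: "b \<in> B \<Longrightarrow> b \<noteq> 0"
  using independent_B dependent_zero by blast

lemma eq_zero_if_coord_eq_zero: "(\<And>b. b \<in> B \<Longrightarrow> coord x b = 0) \<Longrightarrow> x = 0"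
  by (metis (no_types, lifting) sum_coord_scale scale_zero_left sum.neutral)

lemma diff_coord_scale_basis:
  assumes "k \<in> B" shows "x - coord x k *s k = (\<Sum>b\<in>B-{k}. coord x b *s b)"
  using sum.remove[OF finite_B assms, of "\<lambda>b. coord x b *s b"] sum_coord_scale[of x]
  by (simp add: algebra_simps)

lemma mul_linear_right:
  "mul x (a + b) = mul x a + mul x b" "mul x (r *s a) = r *s mul x a"
  "mul x (sum f I) = (\<Sum>i\<in>I. mul x (f i))"
proof -
  interpret L: Vector_Spaces.linear scale scale "mul x" by (rule linear_in_right)
  show "mul x (a + b) = mul x a + mul x b" "mul x (r *s a) = r *s mul x a"
    "mul x (sum f I) = (\<Sum>i\<in>I. mul x (f i))"
    by (simp_all add: L.add L.scale L.sum)
qed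

lemma mul_linear_left:
  "mul (a + b) y = mul a y + mul b y" "mul (r *s a) y = r *s mul a y"
  "mul (sum f I) y = (\<Sum>i\<in>I. mul (f i) y)"
proof -
  interpret L: Vector_Spaces.linear scale scale "\<lambda>x. mul x y" by (rule linear_in_left)
  show "mul (a + b) y = mul a y + mul b y" "mul (r *s a) y = r *s mul a y"
    "mul (sum f I) y = (\<Sum>i\<in>I. mul (f i) y)"
    using L.add L.scale L.sum by auto
qed

lemma mul_basis_right:
  assumes "b \<in> B" shows "mul x b = coord x b *s mul b b"
proof -
  have "mul x b = mul (\<Sum>b'\<in>B. coord x b' *s b') b" by (simp only: sum_coord_scale)
  also have "\<dots> = (\<Sum>b'\<in>B. coord x b' *s mul b' b)" by (simp add: mul_linear_left)
  also have "\<dots> = (\<Sum>b'\<in>B. if b' = b then coord x b *s mul b b else 0)"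
    by (rule sum.cong) (auto simp: mul_basis_distinct assms)
  also have "\<dots> = coord x b *s mul b b" using assms finite_B by simp
  finally show ?thesis .
qed

lemma mul_basis_left:
  assumes "b \<in> B" shows "mul b x = coord x b *s mul b b"
proof -
  have "mul b x = mul b (\<Sum>b'\<in>B. coord x b' *s b')" by (simp only: sum_coord_scale)
  also have "\<dots> = (\<Sum>b'\<in>B. coord x b' *s mul b b')" by (simp add: mul_linear_right)
  also have "\<dots> = (\<Sum>b'\<in>B. if b' = b then coord x b *s mul b b else 0)"
    by (rule sum.cong) (auto simp: mul_basis_distinct assms)
  also have "\<dots> = coord x b *s mul b b" using assms finite_B by simp
  finally show ?thesis .
qed

lemma mul_eq_sum_coord: "mul x y = (\<Sum>b\<in>B. (coord x b * coord y b) *s mul b b)"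
proof -
  have "mul x y = mul x (\<Sum>b\<in>B. coord y b *s b)" by (simp only: sum_coord_scale)
  also have "\<dots> = (\<Sum>b\<in>B. coord y b *s mul x b)" by (simp add: mul_linear_right)
  also have "\<dots> = (\<Sum>b\<in>B. (coord x b * coord y b) *s mul b b)"
    by (rule sum.cong) (auto simp: mul_basis_right[of _ x] mult.commute)
  finally show ?thesis .
qed

lemma has_unit_if_basis_squares_scale:
  assumes "\<And>b. b \<in> B \<Longrightarrow> mul b b = lam b *s b \<and> lam b \<noteq> 0"
  shows "has_unit mul"
proof -
  define u where "u = (\<Sum>b\<in>B. (1 / lam b) *s b)"
  have coord_u: "coord u k = 1 / lam k" if "k \<in> B" for k
    using sum_scale_basis_coord[OF that, of "\<lambda>b. 1 / lam b"] by (simp add: u_def coord_sum coord_scale)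
  have "mul u a = a" "mul a u = a" for a
    using sum_coord_scale[of a]
    by (simp_all add: mul_eq_sum_coord[of u a] mul_eq_sum_coord[of a u] coord_u assms cong: sum.cong)
  then show ?thesis unfolding has_unit_def by blast
qed

context
  fixes u assumes unit: "\<And>a. mul u a = a \<and> mul a u = a"
begin

lemma coord_unit_neq_zero: "k \<in> B \<Longrightarrow> coord u k \<noteq> 0"
  using unit[of k] mul_basis_left[of k u] basis_neq_zero by force

lemma mul_basis_self_unit: "k \<in> B \<Longrightarrow> mul k k = (1 / coord u k) *s k"
  using unit[of k] mul_basis_left[of k u] coord_unit_neq_zero[of k] by (metis scale_scale scale_one nonzero_divide_eq_eq)

lemma coord_mul_unit: "k \<in> B \<Longrightarrow> coord (mul x y) k = coord x k * coord y k / coord u k"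
  using sum_scale_basis_coord[of k "\<lambda>b. coord x b * coord y b / coord u b"]
  by (simp add: mul_eq_sum_coord[of x y] coord_sum coord_scale mul_basis_self_unit cong: sum.cong)

lemma coord_hyperplane_maximal_modular:
  assumes k: "k \<in> B" shows "maximal_modular_ideal scale mul {x. coord x k = 0}"
proof -
  let ?M = "{x. coord x k = 0}"
  have ideal: "alg_ideal scale mul ?M"
    unfolding alg_ideal_def subspace_def by (auto simp: coord_zero coord_add coord_scale coord_mul_unit k)
  have coord_k: "coord k k = 1" using coord_basis[OF k] by simp
  have maximal: "N = ?M" if N: "alg_ideal scale mul N" "?M \<subseteq> N" "N \<noteq> UNIV" for N
  proof (rule ccontr)
    assume "N \<noteq> ?M"
    then obtain x where x: "x \<in> N" "coord x k \<noteq> 0" using N(2) by auto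
    have sN: "subspace N" using N(1) by (simp add: alg_ideal_def)
    have "(coord u k / coord x k) *s mul x k \<in> N"
      using N(1) x(1) sN by (simp add: alg_ideal_def subspace_scale)
    moreover have "(coord u k / coord x k) *s mul x k = k"
      using x(2) coord_unit_neq_zero[OF k] by (simp add: mul_basis_right[OF k, of x] mul_basis_self_unit[OF k])
    ultimately have "k \<in> N" by simp
    have "y \<in> N" for y
    proof -
      have "y - coord y k *s k \<in> N" using N(2) by (auto simp: coord_diff coord_scale coord_k)
      then have "(y - coord y k *s k) + coord y k *s k \<in> N"
        using subspace_add[OF sN _ subspace_scale[OF sN \<open>k \<in> N\<close>]] by blast
      then show ?thesis by simp
    qed
    with N(3) show False by auto
  qed
  have "x - mul x u \<in> ?M" for x using unit by (simp add: coord_zero)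
  moreover have "k \<notin> ?M" using coord_k by simp
  ultimately show ?thesis unfolding maximal_modular_ideal_def modular_ideal_def
    using ideal maximal by blast
qed

lemma unit_imp_semisimple: "semisimple scale mul"
proof -
  have "\<Inter> {M. maximal_modular_ideal scale mul M} \<subseteq> {0}"
    using coord_hyperplane_maximal_modular eq_zero_if_coord_eq_zero by blast
  moreover have "0 \<in> \<Inter> {M. maximal_modular_ideal scale mul M}"
    by (auto simp: maximal_modular_ideal_def modular_ideal_def alg_ideal_def subspace_0)
  ultimately show ?thesis unfolding semisimple_def alg_rad_def by blast
qed

end

lemma mem_span_insert_subspace:
  assumes "subspace M" shows "x \<in> span (insert e M) \<longleftrightarrow> (\<exists>t. x - t *s e \<in> M)"
proof -
  have "span M = M" using assms by simp
  show ?thesis unfolding span_insert \<open>span M = M\<close> by simp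
qed

lemma basis_mem_if_square_mem:
  assumes "modular_ideal scale mul M" "b \<in> B" "mul b b \<in> M" shows "b \<in> M"
proof -
  obtain u where u: "\<And>a. a - mul a u \<in> M" and sM: "subspace M"
    using assms(1) unfolding modular_ideal_def alg_ideal_def by blast
  have "mul b u \<in> M" using assms(3) sM by (simp add: mul_basis_left[OF assms(2), of u] subspace_scale)
  then have "(b - mul b u) + mul b u \<in> M" using subspace_add[OF sM u[of b]] by blast
  then show ?thesis by simp
qed

lemma ideal_span_insert_basis:
  assumes M: "alg_ideal scale mul M" and e: "e \<in> B" and ee: "mul e e \<in> span (insert e M)"
  shows "alg_ideal scale mul (span (insert e M))"
  unfolding alg_ideal_def
proof (intro conjI subspace_span allI impI)
  fix a n assume "n \<in> span (insert e M)"
  then obtain t where m: "n - t *s e \<in> M"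
    using M mem_span_insert_subspace by (auto simp: alg_ideal_def)
  define m where "m = n - t *s e"
  have n: "n = m + t *s e" by (simp add: m_def)
  have "mul a m \<in> span (insert e M)" "mul m a \<in> span (insert e M)"
    using M m by (auto simp: m_def alg_ideal_def intro: span_base)
  moreover have "(t * coord a e) *s mul e e \<in> span (insert e M)" using ee by (simp add: span_scale)
  moreover have "mul a n = mul a m + (t * coord a e) *s mul e e"
    by (simp add: n mul_linear_right mul_basis_right[OF e, of a])
  moreover have "mul n a = mul m a + (t * coord a e) *s mul e e"
    by (simp add: n mul_linear_left mul_basis_left[OF e, of a])
  ultimately show "mul a n \<in> span (insert e M)" "mul n a \<in> span (insert e M)"
    by (auto intro: span_add)
qed

lemma span_insert_missing_basis:
  assumes M: "maximal_modular_ideal scale mul M" and e: "e \<in> B" "e \<notin> M"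
  shows "span (insert e M) = UNIV"
proof -
  obtain u where u: "\<And>a. a - mul a u \<in> M" and ideal: "alg_ideal scale mul M"
    and sM: "subspace M"
    using M unfolding maximal_modular_ideal_def modular_ideal_def alg_ideal_def by blast
  have coord_u: "coord u e \<noteq> 0"
    using u[of e] e(2) mul_basis_left[OF e(1), of u] by auto
  have "mul e e - (1 / coord u e) *s e = - ((1 / coord u e) *s (e - mul e u))"
    using coord_u by (simp add: mul_basis_left[OF e(1), of u] scale_right_diff_distrib)
  also have "\<dots> \<in> M" using u[of e] sM by (simp add: subspace_neg subspace_scale)
  finally have "mul e e \<in> span (insert e M)"
    using sM mem_span_insert_subspace by blast
  then have "alg_ideal scale mul (span (insert e M))"
    using ideal_span_insert_basis[OF ideal e(1)] by blast
  moreover have "M \<subseteq> span (insert e M)" "span (insert e M) \<noteq> M"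
    using e(2) span_superset[of "insert e M"] by auto
  ultimately show ?thesis using M unfolding maximal_modular_ideal_def by blast
qed

lemma maximal_modular_contains_other_basis:
  assumes M: "maximal_modular_ideal scale mul M" and e: "e \<in> B" "e \<notin> M"
    and e': "e' \<in> B" "e' \<noteq> e"
  shows "e' \<in> M"
proof -
  have modular: "modular_ideal scale mul M" and ideal: "alg_ideal scale mul M"
    using M by (auto simp: maximal_modular_ideal_def modular_ideal_def)
  then have sM: "subspace M" by (simp add: alg_ideal_def)
  obtain t where t: "e' - t *s e \<in> M"
    using span_insert_missing_basis[OF M e] mem_span_insert_subspace[OF sM] by blast
  have "mul e' e' = mul e' (e' - t *s e) + t *s mul e' e"
    using mul_linear_right(1)[of e' "e' - t *s e" "t *s e"] by (simp add: mul_linear_right(2))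
  then have "mul e' e' = mul e' (e' - t *s e)"
    using mul_basis_distinct[OF e'(1) e(1) e'(2)] by simp
  then have "mul e' e' \<in> M" using ideal t by (simp add: alg_ideal_def)
  then show ?thesis using basis_mem_if_square_mem[OF modular e'(1)] by blast
qed

lemma coord_maximal_modular_eq_zero:
  assumes M: "maximal_modular_ideal scale mul M" and e: "e \<in> B" "e \<notin> M" and x: "x \<in> M"
  shows "coord x e = 0"
proof (rule ccontr)
  assume nz: "coord x e \<noteq> 0"
  have sM: "subspace M"
    using M by (simp add: maximal_modular_ideal_def modular_ideal_def alg_ideal_def)
  have "x - coord x e *s e \<in> M"
    using maximal_modular_contains_other_basis[OF M e] sM
    by (auto simp: diff_coord_scale_basis[OF e(1)] intro!: subspace_sum subspace_scale)
  then have "coord x e *s e \<in> M" using subspace_diff[OF sM x] by fastforce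
  then have "(1 / coord x e) *s (coord x e *s e) \<in> M" using subspace_scale[OF sM] by blast
  then show False using nz e(2) by simp
qed

lemma semisimple_imp_unit:
  assumes "semisimple scale mul" shows "has_unit mul"
proof (rule has_unit_if_basis_squares_scale)
  have missed: "\<exists>M. maximal_modular_ideal scale mul M \<and> k \<notin> M" if "k \<in> B" for k
    using assms basis_neq_zero[OF that] unfolding semisimple_def alg_rad_def by blast
  fix k assume k: "k \<in> B"
  have "coord (mul k k) b = 0" if b: "b \<in> B" "b \<noteq> k" for b
  proof -
    obtain M where M: "maximal_modular_ideal scale mul M" "b \<notin> M" using missed[OF b(1)] by blast
    have "k \<in> M" using maximal_modular_contains_other_basis[OF M(1) b(1) M(2) k] b(2) by simp
    then have "mul k k \<in> M" using M(1)
      by (simp add: maximal_modular_ideal_def modular_ideal_def alg_ideal_def)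
    then show ?thesis using coord_maximal_modular_eq_zero[OF M(1) b(1) M(2)] by simp
  qed
  then have "(\<Sum>b\<in>B. coord (mul k k) b *s b) = (\<Sum>b\<in>B. if b = k then coord (mul k k) k *s k else 0)"
    by (intro sum.cong) auto
  then have square: "mul k k = coord (mul k k) k *s k"
    using finite_B k sum_coord_scale[of "mul k k"] by simp
  obtain M where M: "maximal_modular_ideal scale mul M" "k \<notin> M" using missed[OF k] by blast
  have "coord (mul k k) k \<noteq> 0"
    using basis_mem_if_square_mem[of M k] M square k
    by (auto simp: maximal_modular_ideal_def modular_ideal_def alg_ideal_def subspace_0)
  with square show "mul k k = coord (mul k k) k *s k \<and> coord (mul k k) k \<noteq> 0" by blast
qed

end

lemma fin_dim_evolution_algebra_semisimple_iff_has_unit: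
  fixes scale :: "'k::field \<Rightarrow> 'v::ab_group_add \<Rightarrow> 'v" and mul :: "'v \<Rightarrow> 'v \<Rightarrow> 'v"
  assumes "fin_dim_evolution_algebra scale mul"
  shows "semisimple scale mul \<longleftrightarrow> has_unit mul"
proof -
  obtain B where "finite B" "natural_basis scale mul B" "is_algebra scale mul"
    using assms unfolding fin_dim_evolution_algebra_def by blast
  then interpret finite_evolution_algebra scale mul B
    unfolding finite_evolution_algebra_def finite_evolution_algebra_axioms_def
      is_algebra_def natural_basis_def by blast
  show ?thesis using semisimple_imp_unit unit_imp_semisimple unfolding has_unit_def by blast
qed

theorem corollary3p15:
  fixes scR :: "real \<Rightarrow> 'v::ab_group_add \<Rightarrow> 'v" and mulR :: "'v \<Rightarrow> 'v \<Rightarrow> 'v"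
    and scC :: "complex \<Rightarrow> 'w::ab_group_add \<Rightarrow> 'w" and mulC :: "'w \<Rightarrow> 'w \<Rightarrow> 'w"
  shows "(fin_dim_evolution_algebra scR mulR \<longrightarrow> (semisimple scR mulR \<longleftrightarrow> has_unit mulR)) \<and>
         (fin_dim_evolution_algebra scC mulC \<longrightarrow> (semisimple scC mulC \<longleftrightarrow> has_unit mulC))"
  using fin_dim_evolution_algebra_semisimple_iff_has_unit[of scR mulR]
    fin_dim_evolution_algebra_semisimple_iff_has_unit[of scC mulC] by blast

end
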